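(* Let $\Gamma=\mathbb F_r$ and let $\varepsilon_c=\varepsilon_c(r)$ be the constant defined below. If $\varepsilon<\varepsilon_c$, then for all sufficiently small $\delta>0$, \[\liminf_{n\to\infty}\frac1n\log\mathbb P\Big(\frac{\mathsf{mcut}(\sigma_n)}{rn}<\varepsilon+\delta\Big)<0,\] where $\sigma_n\in\mathrm{Hom}(\mathbb F_r,\mathrm{Sym}([n]))$ is uniformly random.
   Context: $\Gamma=\mathbb F_r$ is the free group on $s_1,\dots,s_r$. For a finite set $V$ and $\sigma\in\mathrm{Hom}(\mathbb F_r,\mathrm{Sym}(V))$, the graph of $\sigma$ is the multigraph with one edge $\{v,\sigma(s_i)v\}$ for each $v\in V$, $i\in[r]$ (so $|V|r$ edges). A bisection of $V$ is a partition $V=V_1\sqcup V_2$ with $||V_1|-|V_2||\le1$; its cut size is the number of edges with endpoints in different parts; $\mathsf{mcut}(\sigma)$ is the minimum cut size over bisections of the graph of $\sigma$. $\sigma_n\in\mathrm{Hom}(\mathbb F_r,\mathrm{Sym}([n]))$ is uniformly random, i.e. $\sigma_n(s_1),\dots,\sigma_n(s_r)$ are independent uniform permutations of $[n]$. The constant $\varepsilon_c=\varepsilon_c(r)$ is the limit in probability of $\mathsf{mcut}(\sigma_n)/(rn)$ as $n\to\infty$ (its existence, with $\varepsilon_c=\frac12-\mathsf P_*\frac1{\sqrt{2r}}+o_r(r^{-1/2})$, $\mathsf P_*\approx0.7632$, is due to Dembo–Montanari–Sen, and may be assumed). *)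

theory Defs
  imports "HOL-Probability.Probability" "HOL-Combinatorics.Permutations"
begin

text \<open>A homomorphism from the free group F_r (generators s_0,...,s_{r-1}) to Sym([n]),
  with [n] = {0..<n}, is determined by the images of the generators; we represent it
  by the tuple of these r permutations.\<close>
definition homs :: "nat \<Rightarrow> nat \<Rightarrow> (nat \<Rightarrow> nat \<Rightarrow> nat) set" where
  "homs r n = PiE {..<r} (\<lambda>_. {p. p permutes {..<n}})"

definition unif_hom :: "nat \<Rightarrow> nat \<Rightarrow> (nat \<Rightarrow> nat \<Rightarrow> nat) pmf" where
  "unif_hom r n = pmf_of_set (homs r n)"

text \<open>Graph of sigma: one edge {v, sigma(s_i) v} for each v < n, i < r (multigraph).
  Cut size of a part V1: number of such edges with endpoints in different parts.\<close>
definition cut_size :: "nat \<Rightarrow> nat \<Rightarrow> (nat \<Rightarrow> nat \<Rightarrow> nat) \<Rightarrow> nat set \<Rightarrow> nat" where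
  "cut_size r n \<sigma> V1 = card {(v, i). v < n \<and> i < r \<and> ((v \<in> V1) \<noteq> (\<sigma> i v \<in> V1))}"

definition is_bisection :: "nat \<Rightarrow> nat set \<Rightarrow> bool" where
  "is_bisection n V1 \<longleftrightarrow> V1 \<subseteq> {..<n} \<and>
     \<bar>int (card V1) - int (card ({..<n} - V1))\<bar> \<le> 1"

definition mcut :: "nat \<Rightarrow> nat \<Rightarrow> (nat \<Rightarrow> nat \<Rightarrow> nat) \<Rightarrow> nat" where
  "mcut r n \<sigma> = Min {cut_size r n \<sigma> V1 | V1. is_bisection n V1}"

definition mcut_ratio :: "nat \<Rightarrow> nat \<Rightarrow> (nat \<Rightarrow> nat \<Rightarrow> nat) \<Rightarrow> real" where
  "mcut_ratio r n \<sigma> = real (mcut r n \<sigma>) / (real r * real n)"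

definition elog :: "real \<Rightarrow> ereal" where
  "elog p = (if p = 0 then - \<infinity> else ereal (ln p))"

end

theory Submission
  imports Defs
begin

(*
  A uniformly random sigma_n is a function of r n independent uniform coordinates (one
  Fisher-Yates code per generator). Changing one coordinate changes a Fisher-Yates permutation
  at no more than three points, hence at most three edges of the graph and mcut by at most
  three, so McDiarmid's inequality gives P(mcut <= E mcut - t) <= exp (-2 t^2 / (9 r n)).
  Convergence of mcut/(r n) to eps_c in probability forces E mcut >= (eps_c - o(1)) r n, so for
  eps + delta < eps_c the probability that mcut/(r n) < eps + delta decays exponentially in n.
*)

definition avg :: "'a set \<Rightarrow> ('a \<Rightarrow> real) \<Rightarrow> real" where
  "avg A f = (\<Sum>x\<in>A. f x) / real (card A)"

lemma avg_mono: "finite A \<Longrightarrow> (\<And>x. x \<in> A \<Longrightarrow> f x \<le> g x) \<Longrightarrow> avg A f \<le> avg A g"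
  unfolding avg_def by (intro divide_right_mono sum_mono) auto

lemma avg_const: "finite A \<Longrightarrow> A \<noteq> {} \<Longrightarrow> avg A (\<lambda>_. k) = k"
  unfolding avg_def by simp

lemma avg_cmult: "avg A (\<lambda>x. k * f x) = k * avg A f"
  unfolding avg_def by (simp add: sum_distrib_left)

lemma avg_diff: "avg A (\<lambda>x. f x - g x) = avg A f - avg A g"
  unfolding avg_def by (simp add: sum_subtractf diff_divide_distrib)

lemma avg_reindex_bij_betw: "bij_betw h A B \<Longrightarrow> avg B f = avg A (\<lambda>x. f (h x))"
  unfolding avg_def by (simp add: sum.reindex_bij_betw bij_betw_same_card)

lemma avg_ge_of_few_below:
  assumes "finite A" "A \<noteq> {}" "\<And>x. x \<in> A \<Longrightarrow> f x \<ge> 0" "m \<ge> 0"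
    and few: "real (card {x\<in>A. f x < m}) \<le> q * real (card A)"
  shows "(1 - q) * m \<le> avg A f"
proof -
  define B where "B = {x\<in>A. f x < m}"
  have B: "B \<subseteq> A" "finite B" using assms(1) by (auto simp: B_def)
  have "(1 - q) * m * real (card A) \<le> (real (card A) - real (card B)) * m"
    using mult_left_mono[OF few assms(4)] by (simp add: B_def algebra_simps)
  also have "\<dots> = (\<Sum>x\<in>A - B. m)"
    using B assms(1) by (simp add: card_Diff_subset of_nat_diff card_mono)
  also have "\<dots> \<le> (\<Sum>x\<in>A - B. f x)"
    by (rule sum_mono) (auto simp: B_def)
  also have "\<dots> \<le> (\<Sum>x\<in>A. f x)"
    by (rule sum_mono2) (use assms(1,3) in auto)
  finally show ?thesis
    using assms(1,2) by (simp add: avg_def le_divide_eq card_gt_0_iff)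
qed

lemma hoeffdings_lemma_avg:
  assumes "finite S" "S \<noteq> {}" "\<And>x y. x \<in> S \<Longrightarrow> y \<in> S \<Longrightarrow> g x - g y \<le> c" "l > 0"
  shows "avg S (\<lambda>x. exp (l * (g x - avg S g))) \<le> exp (l\<^sup>2 * c\<^sup>2 / 8)"
proof -
  define m where "m = Min (g ` S)"
  have "m \<in> g ` S"
    unfolding m_def using assms(1,2) by (intro Min_in) auto
  then obtain x0 where x0: "x0 \<in> S" "m = g x0"
    by blast
  have range: "g x \<in> {m..m + c}" if "x \<in> S" for x
  proof -
    have "m \<le> g x" unfolding m_def using assms(1) that by (intro Min_le) auto
    moreover have "g x \<le> m + c" using assms(3)[OF that x0(1)] x0(2) by simp
    ultimately show ?thesis by simp
  qed
  interpret interval_bounded_random_variable "measure_pmf (pmf_of_set S)" g m "m + c"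
    by unfold_locales (use assms(1,2) range in \<open>auto simp: AE_measure_pmf_iff\<close>)
  have E: "measure_pmf.expectation (pmf_of_set S) g = avg S g"
    using integral_pmf_of_set[OF assms(2,1), of g] unfolding avg_def by simp
  have "ennreal (avg S (\<lambda>x. exp (l * (g x - avg S g))))
      = nn_integral (measure_pmf (pmf_of_set S))
          (\<lambda>x. exp (l * (g x - measure_pmf.expectation (pmf_of_set S) g)))"
    using assms(1,2) by (simp add: nn_integral_pmf_of_set E avg_def sum_ennreal
        ennreal_of_nat_eq_real_of_nat divide_ennreal sum_nonneg card_gt_0_iff)
  also have "\<dots> \<le> ennreal (exp (l\<^sup>2 * (m + c - m)\<^sup>2 / 8))"
    using Hoeffdings_lemma_nn_integral[OF assms(4)] by simp
  finally show ?thesis by (simp add: ennreal_le_iff)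
qed

section \<open>McDiarmid's inequality on finite product sets\<close>

lemma listset_Cons_eq: "listset (S # Ss) = (\<lambda>(a, ys). a # ys) ` (S \<times> listset Ss)"
  by (auto simp: set_Cons_def)

lemma listset_Cons_iff: "x # xs \<in> listset (S # Ss) \<longleftrightarrow> x \<in> S \<and> xs \<in> listset Ss"
  by (auto simp: set_Cons_def)

lemma listset_ConsE:
  assumes "xs \<in> listset (S # Ss)"
  obtains x ys where "xs = x # ys" "x \<in> S" "ys \<in> listset Ss"
  using assms by (auto simp: set_Cons_def)

declare listset.simps(2)[simp del]

lemma length_listset: "xs \<in> listset Ss \<Longrightarrow> length xs = length Ss"
  by (induction Ss arbitrary: xs) (auto elim: listset_ConsE)

lemma finite_listset: "\<forall>S\<in>set Ss. finite S \<Longrightarrow> finite (listset Ss)"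
  by (induction Ss) (auto simp: listset_Cons_eq)

lemma listset_nonempty: "\<forall>S\<in>set Ss. S \<noteq> {} \<Longrightarrow> listset Ss \<noteq> {}"
  by (induction Ss) (auto simp: listset_Cons_eq)

lemma listset_append_iff:
  "xs \<in> listset (A @ B) \<longleftrightarrow> (\<exists>a b. xs = a @ b \<and> a \<in> listset A \<and> b \<in> listset B)"
proof (induction A arbitrary: xs)
  case Nil
  then show ?case by simp
next
  case (Cons S A)
  show ?case
  proof
    assume "xs \<in> listset ((S # A) @ B)"
    then obtain x ys where x: "xs = x # ys" "x \<in> S" "ys \<in> listset (A @ B)"
      by (auto elim: listset_ConsE)
    then obtain a b where "ys = a @ b" "a \<in> listset A" "b \<in> listset B"
      using Cons.IH by blast
    then show "\<exists>a b. xs = a @ b \<and> a \<in> listset (S # A) \<and> b \<in> listset B"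
      using x by (intro exI[of _ "x # a"] exI[of _ b]) (simp add: listset_Cons_iff)
  next
    assume "\<exists>a b. xs = a @ b \<and> a \<in> listset (S # A) \<and> b \<in> listset B"
    then obtain x a b where "xs = x # a @ b" "x \<in> S" "a \<in> listset A" "b \<in> listset B"
      by (auto elim: listset_ConsE)
    then show "xs \<in> listset ((S # A) @ B)"
      using Cons.IH by (auto simp: listset_Cons_iff)
  qed
qed

lemma bij_betw_append_listset:
  "bij_betw (\<lambda>(a, b). a @ b) (listset A \<times> listset B) (listset (A @ B))"
proof (rule bij_betw_imageI)
  show "inj_on (\<lambda>(a, b). a @ b) (listset A \<times> listset B)"
    by (rule inj_onI) (auto simp: length_listset)
  show "(\<lambda>(a, b). a @ b) ` (listset A \<times> listset B) = listset (A @ B)"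
    unfolding set_eq_iff listset_append_iff by fast
qed

lemma avg_listset_Cons:
  assumes "finite S" "finite (listset Ss)" "listset Ss \<noteq> {}"
  shows "avg (listset (S # Ss)) h = avg S (\<lambda>a. avg (listset Ss) (\<lambda>ys. h (a # ys)))"
proof -
  have inj: "inj_on (\<lambda>(a, ys). a # ys) (S \<times> listset Ss)"
    by (auto simp: inj_on_def)
  have "sum h (listset (S # Ss)) = (\<Sum>a\<in>S. \<Sum>ys\<in>listset Ss. h (a # ys))"
    unfolding listset_Cons_eq sum.reindex[OF inj] sum.cartesian_product by (rule sum.cong) auto
  moreover have "card (listset (S # Ss)) = card S * card (listset Ss)"
    unfolding listset_Cons_eq card_image[OF inj] by (simp add: card_cartesian_product)
  ultimately show ?thesis
    using assms unfolding avg_def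
    by (simp add: sum_divide_distrib[symmetric] card_gt_0_iff field_simps)
qed

definition differ_in_one :: "'a list \<Rightarrow> 'a list \<Rightarrow> bool" where
  "differ_in_one xs ys \<longleftrightarrow> (\<exists>us a b vs. xs = us @ a # vs \<and> ys = us @ b # vs)"

lemma differ_in_one_sym: "differ_in_one xs ys \<Longrightarrow> differ_in_one ys xs"
  unfolding differ_in_one_def by blast

lemma differ_in_one_Cons: "differ_in_one xs ys \<Longrightarrow> differ_in_one (a # xs) (a # ys)"
  unfolding differ_in_one_def by (metis append_Cons)

lemma differ_in_one_head: "differ_in_one (a # xs) (b # xs)"
  unfolding differ_in_one_def by (metis append_Nil)

lemma differ_in_one_append:
  assumes "length a = length a'" "differ_in_one (a @ b) (a' @ b')"
  shows "(a = a' \<and> differ_in_one b b') \<or> (differ_in_one a a' \<and> b = b')"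
proof -
  obtain us x y vs where e: "a @ b = us @ x # vs" "a' @ b' = us @ y # vs"
    using assms(2) unfolding differ_in_one_def by blast
  define k where "k = length a"
  have a: "a = take k (us @ x # vs)" "b = drop k (us @ x # vs)"
    using e(1) unfolding k_def by (metis append_eq_conv_conj)+
  have a': "a' = take k (us @ y # vs)" "b' = drop k (us @ y # vs)"
    using e(2) assms(1) unfolding k_def by (metis append_eq_conv_conj)+
  show ?thesis
  proof (cases "k \<le> length us")
    case True
    then have "a = a'" "b = drop k us @ x # vs" "b' = drop k us @ y # vs"
      using a a' by auto
    then show ?thesis unfolding differ_in_one_def by blast
  next
    case False
    obtain m where m: "k - length us = Suc m" using False by (cases "k - length us") auto
    then have "a = us @ x # take m vs" "a' = us @ y # take m vs" "b = b'"
      using a a' False by auto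
    then show ?thesis unfolding differ_in_one_def by blast
  qed
qed

lemma avg_Cons_differ_le:
  assumes "finite (listset Ss)" "listset Ss \<noteq> {}" "a \<in> S" "a' \<in> S"
    "\<forall>xs\<in>listset (S # Ss). \<forall>ys\<in>listset (S # Ss). differ_in_one xs ys \<longrightarrow> f xs - f ys \<le> c"
  shows "avg (listset Ss) (\<lambda>ys. f (a # ys)) - avg (listset Ss) (\<lambda>ys. f (a' # ys)) \<le> c"
proof -
  have "avg (listset Ss) (\<lambda>ys. f (a # ys)) - avg (listset Ss) (\<lambda>ys. f (a' # ys))
      = avg (listset Ss) (\<lambda>ys. f (a # ys) - f (a' # ys))"
    by (simp add: avg_diff)
  also have "\<dots> \<le> avg (listset Ss) (\<lambda>_. c)"
  proof (rule avg_mono[OF assms(1)])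
    fix ys assume "ys \<in> listset Ss"
    then show "f (a # ys) - f (a' # ys) \<le> c"
      using assms(3-5) differ_in_one_head[of a ys a'] by (simp add: listset_Cons_iff)
  qed
  also have "\<dots> = c" using assms(1,2) by (simp add: avg_const)
  finally show ?thesis .
qed

text \<open>Martingale argument: given the first coordinate, the conditional mean has range at most c,
  so Hoeffding's lemma bounds its contribution and induction bounds the rest.\<close>

lemma mcdiarmid_mgf:
  assumes "\<forall>S\<in>set Ss. finite S \<and> S \<noteq> {}" "c \<ge> 0" "l > 0"
    "\<forall>xs\<in>listset Ss. \<forall>ys\<in>listset Ss. differ_in_one xs ys \<longrightarrow> f xs - f ys \<le> c"
  shows "avg (listset Ss) (\<lambda>xs. exp (l * (f xs - avg (listset Ss) f)))
           \<le> exp (l\<^sup>2 * c\<^sup>2 * real (length Ss) / 8)"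
  using assms
proof (induction Ss arbitrary: f)
  case Nil
  then show ?case by (simp add: avg_def)
next
  case (Cons S Ss)
  define L where "L = listset Ss"
  have S: "finite S" "S \<noteq> {}" using Cons.prems by auto
  have L: "finite L" "L \<noteq> {}"
    using Cons.prems finite_listset[of Ss] listset_nonempty[of Ss] by (auto simp: L_def)
  define g where "g a = avg L (\<lambda>ys. f (a # ys))" for a
  define E where "E = avg S g"
  define K where "K = exp (l\<^sup>2 * c\<^sup>2 * real (length Ss) / 8)"
  have Ef: "avg (listset (S # Ss)) f = E"
    unfolding E_def g_def L_def by (rule avg_listset_Cons) (use S L in \<open>auto simp: L_def\<close>)
  have IH: "avg L (\<lambda>ys. exp (l * (f (a # ys) - g a))) \<le> K" if a: "a \<in> S" for a
    unfolding L_def g_def K_def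
  proof (rule Cons.IH)
    show "\<forall>xs\<in>listset Ss. \<forall>ys\<in>listset Ss. differ_in_one xs ys \<longrightarrow> f (a # xs) - f (a # ys) \<le> c"
      using Cons.prems(4) a by (auto simp: listset_Cons_iff dest: differ_in_one_Cons[of _ _ a])
  qed (use Cons.prems in auto)
  have g_diff: "g a - g a' \<le> c" if "a \<in> S" "a' \<in> S" for a a'
    unfolding g_def L_def using L Cons.prems(4) that by (intro avg_Cons_differ_le) (auto simp: L_def)
  have hoeffding: "avg S (\<lambda>a. exp (l * (g a - E))) \<le> exp (l\<^sup>2 * c\<^sup>2 / 8)"
    unfolding E_def by (rule hoeffdings_lemma_avg) (use S g_diff Cons.prems(3) in auto)
  have "avg (listset (S # Ss)) (\<lambda>xs. exp (l * (f xs - E)))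
     = avg S (\<lambda>a. avg L (\<lambda>ys. exp (l * (g a - E)) * exp (l * (f (a # ys) - g a))))"
    unfolding L_def
    by (subst avg_listset_Cons) (use S L in \<open>auto simp: L_def simp flip: exp_add
        intro!: arg_cong[where f=exp] simp: algebra_simps\<close>)
  also have "\<dots> = avg S (\<lambda>a. exp (l * (g a - E)) * avg L (\<lambda>ys. exp (l * (f (a # ys) - g a))))"
    by (simp add: avg_cmult)
  also have "\<dots> \<le> avg S (\<lambda>a. exp (l * (g a - E)) * K)"
    using S IH by (intro avg_mono mult_left_mono) auto
  also have "\<dots> = K * avg S (\<lambda>a. exp (l * (g a - E)))"
    by (simp add: avg_cmult[symmetric] mult.commute)
  also have "\<dots> \<le> K * exp (l\<^sup>2 * c\<^sup>2 / 8)"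
    using hoeffding by (intro mult_left_mono) (auto simp: K_def)
  also have "\<dots> = exp (l\<^sup>2 * c\<^sup>2 * real (length (S # Ss)) / 8)"
    unfolding K_def by (simp add: exp_add[symmetric] algebra_simps add_divide_distrib)
  finally show ?case by (simp add: Ef)
qed

lemma mcdiarmid_lower_tail:
  assumes "\<forall>S\<in>set Ss. finite S \<and> S \<noteq> {}" "c > 0" "t > 0" "Ss \<noteq> []"
    "\<forall>xs\<in>listset Ss. \<forall>ys\<in>listset Ss. differ_in_one xs ys \<longrightarrow> f xs - f ys \<le> c"
  shows "real (card {xs\<in>listset Ss. f xs \<le> avg (listset Ss) f - t})
           \<le> real (card (listset Ss)) * exp (- 2 * t\<^sup>2 / (c\<^sup>2 * real (length Ss)))"
proof -
  define L where "L = listset Ss"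
  define N where "N = real (length Ss)"
  have N: "N > 0" using assms by (simp add: N_def)
  have L: "finite L" using finite_listset assms(1) by (auto simp: L_def)
  define l where "l = 4 * t / (c\<^sup>2 * N)"
  have l: "l > 0" using assms N by (simp add: l_def)
  have avg_neg: "avg L (\<lambda>xs. - f xs) = - avg L f"
    unfolding avg_def by (simp add: sum_negf)
  have mgf: "avg L (\<lambda>xs. exp (l * (- f xs - avg L (\<lambda>xs. - f xs)))) \<le> exp (l\<^sup>2 * c\<^sup>2 * N / 8)"
    unfolding L_def N_def
    by (rule mcdiarmid_mgf) (use assms l in \<open>auto intro: differ_in_one_sym\<close>)
  define A where "A = {xs\<in>L. f xs \<le> avg L f - t}"
  \<comment> \<open>Chernoff bound\<close>
  have "real (card A) * exp (l * t) = (\<Sum>xs\<in>A. exp (l * t))" by simp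
  also have "\<dots> \<le> (\<Sum>xs\<in>A. exp (l * (- f xs - avg L (\<lambda>xs. - f xs))))"
    by (intro sum_mono) (use l in \<open>auto simp: A_def avg_neg\<close>)
  also have "\<dots> \<le> (\<Sum>xs\<in>L. exp (l * (- f xs - avg L (\<lambda>xs. - f xs))))"
    by (intro sum_mono2) (use L in \<open>auto simp: A_def\<close>)
  also have "\<dots> = real (card L) * avg L (\<lambda>xs. exp (l * (- f xs - avg L (\<lambda>xs. - f xs))))"
    using L assms(1,4) listset_nonempty[of Ss] by (simp add: avg_def L_def card_gt_0_iff)
  also have "\<dots> \<le> real (card L) * exp (l\<^sup>2 * c\<^sup>2 * N / 8)"
    by (intro mult_left_mono mgf) auto
  finally have "real (card A) \<le> real (card L) * exp (l\<^sup>2 * c\<^sup>2 * N / 8) / exp (l * t)"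
    by (simp add: field_simps)
  also have "\<dots> = real (card L) * exp (l\<^sup>2 * c\<^sup>2 * N / 8 - l * t)"
    by (simp add: exp_diff)
  also have "l\<^sup>2 * c\<^sup>2 * N / 8 - l * t = - 2 * t\<^sup>2 / (c\<^sup>2 * N)"
    using assms N unfolding l_def by (simp add: field_simps power2_eq_square)
  finally show ?thesis by (simp add: A_def L_def N_def)
qed

section \<open>Fisher-Yates encoding of permutations\<close>

text \<open>The list js = [j_{k-1}, ..., j_0] with j_i \<le> i encodes the permutation
  (k-1 j_{k-1}) \<circ> ... \<circ> (0 j_0) of {..<k}; every permutation has exactly one code.\<close>

primrec fisher_yates :: "nat list \<Rightarrow> nat \<Rightarrow> nat" where
  "fisher_yates [] = id"
| "fisher_yates (j # js) = Transposition.transpose (length js) j \<circ> fisher_yates js"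

primrec fisher_yates_ranges :: "nat \<Rightarrow> nat set list" where
  "fisher_yates_ranges 0 = []"
| "fisher_yates_ranges (Suc k) = {..k} # fisher_yates_ranges k"

lemma fisher_yates_ranges_finite_nonempty:
  "\<forall>S\<in>set (fisher_yates_ranges k). finite S \<and> S \<noteq> {}"
  by (induction k) auto

lemma length_fisher_yates_ranges [simp]: "length (fisher_yates_ranges k) = k"
  by (induction k) auto

lemma fisher_yates_Cons_apply [simp]:
  "fisher_yates (j # js) x = Transposition.transpose (length js) j (fisher_yates js x)"
  by simp

declare fisher_yates.simps(2) [simp del]

lemma bij_fisher_yates: "bij (fisher_yates js)"
  by (induction js) (simp_all only: fisher_yates.simps bij_comp bij_id bij_transpose)

lemma fisher_yates_permutes:
  "js \<in> listset (fisher_yates_ranges k) \<Longrightarrow> fisher_yates js permutes {..<k}"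
proof (induction k arbitrary: js)
  case 0
  then have "js = []" by simp
  then show ?case by (simp only: fisher_yates.simps permutes_id)
next
  case (Suc k)
  then obtain j js' where js: "js = j # js'" "j \<le> k" "js' \<in> listset (fisher_yates_ranges k)"
    by (auto elim: listset_ConsE)
  have "fisher_yates js' permutes {..<Suc k}"
    by (rule permutes_subset[OF Suc.IH[OF js(3)]]) auto
  moreover have "Transposition.transpose k j permutes {..<Suc k}"
    using js by (intro permutes_swap_id) auto
  ultimately show ?case
    using js length_listset[OF js(3)]
    by (simp only: fisher_yates.simps length_fisher_yates_ranges permutes_compose)
qed

lemma inj_on_fisher_yates: "inj_on fisher_yates (listset (fisher_yates_ranges k))"
proof (induction k)
  case 0
  then show ?case by simp
next
  case (Suc k)
  show ?case
  proof (rule inj_onI)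
    fix xs ys
    assume "xs \<in> listset (fisher_yates_ranges (Suc k))" "ys \<in> listset (fisher_yates_ranges (Suc k))"
      and eq: "fisher_yates xs = fisher_yates ys"
    then obtain j js j' js' where xs: "xs = j # js" "js \<in> listset (fisher_yates_ranges k)"
      and ys: "ys = j' # js'" "js' \<in> listset (fisher_yates_ranges k)"
      by (auto elim!: listset_ConsE)
    have len: "length js = k" "length js' = k"
      using length_listset[OF xs(2)] length_listset[OF ys(2)] by auto
    have fix_k: "fisher_yates js k = k" "fisher_yates js' k = k"
      using permutes_not_in[OF fisher_yates_permutes[OF xs(2)]]
        permutes_not_in[OF fisher_yates_permutes[OF ys(2)]] by auto
    \<comment> \<open>the first code entry is recovered as the image of the top point k\<close>
    have "j = j'"
      using fun_cong[OF eq, of k] fix_k len by (simp add: xs ys)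
    moreover have "fisher_yates js = fisher_yates js'"
    proof
      fix x
      have "Transposition.transpose k j (fisher_yates js x)
          = Transposition.transpose k j (fisher_yates js' x)"
        using fun_cong[OF eq, of x] len \<open>j = j'\<close> by (simp add: xs ys)
      then show "fisher_yates js x = fisher_yates js' x" by (metis transpose_involutory)
    qed
    then have "js = js'" using Suc.IH xs(2) ys(2) by (auto dest: inj_onD)
    ultimately show "xs = ys" using xs ys by simp
  qed
qed

lemma fisher_yates_surj:
  "q permutes {..<k} \<Longrightarrow> \<exists>js\<in>listset (fisher_yates_ranges k). fisher_yates js = q"
proof (induction k arbitrary: q)
  case 0
  then show ?case by (auto simp: permutes_empty)
next
  case (Suc k)
  have "Transposition.transpose k (q k) \<circ> q permutes {..<k}"
    using permutes_insert_lemma[of q k "{..<k}"] Suc.prems by (simp add: lessThan_Suc)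
  then obtain js where js: "js \<in> listset (fisher_yates_ranges k)"
      "fisher_yates js = Transposition.transpose k (q k) \<circ> q"
    using Suc.IH by blast
  have "q k \<le> k" using permutes_in_image[OF Suc.prems, of k] by auto
  then have "q k # js \<in> listset (fisher_yates_ranges (Suc k))"
    using js by (simp add: listset_Cons_iff)
  moreover have "fisher_yates (q k # js) = q"
    using js length_listset[OF js(1)] by (simp add: fisher_yates.simps o_assoc)
  ultimately show ?case by blast
qed

lemma bij_betw_fisher_yates:
  "bij_betw fisher_yates (listset (fisher_yates_ranges k)) {p. p permutes {..<k}}"
  unfolding bij_betw_def using inj_on_fisher_yates fisher_yates_permutes fisher_yates_surj
  by fastforce

lemma fisher_yates_differ_in_one:
  assumes "differ_in_one xs ys"
  shows "finite {x. fisher_yates xs x \<noteq> fisher_yates ys x}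
    \<and> card {x. fisher_yates xs x \<noteq> fisher_yates ys x} \<le> 3"
proof -
  obtain us a b vs where xs: "xs = us @ a # vs" and ys: "ys = us @ b # vs"
    using assms unfolding differ_in_one_def by blast
  \<comment> \<open>the transpositions applied after the differing one act bijectively, so they do not matter\<close>
  have "{x. fisher_yates (us @ a # vs) x \<noteq> fisher_yates (us @ b # vs) x}
      = {x. fisher_yates (a # vs) x \<noteq> fisher_yates (b # vs) x}"
  proof (induction us)
    case (Cons u us)
    have "fisher_yates ((u # us) @ a # vs) x = fisher_yates ((u # us) @ b # vs) x
      \<longleftrightarrow> fisher_yates (us @ a # vs) x = fisher_yates (us @ b # vs) x" for x
      by (simp del: fisher_yates_Cons_apply add: fisher_yates.simps inj_eq
          bij_is_inj[OF bij_transpose])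
    then show ?case using Cons.IH by simp
  qed simp
  also have "\<dots> \<subseteq> inv (fisher_yates vs) ` {length vs, a, b}"
  proof
    fix x assume x: "x \<in> {x. fisher_yates (a # vs) x \<noteq> fisher_yates (b # vs) x}"
    have "fisher_yates vs x \<in> {length vs, a, b}"
      using x by (auto simp: Transposition.transpose_def split: if_splits)
    moreover have "inv (fisher_yates vs) (fisher_yates vs x) = x"
      using bij_fisher_yates[of vs] by (simp add: bij_def)
    ultimately show "x \<in> inv (fisher_yates vs) ` {length vs, a, b}" by (metis imageI)
  qed
  finally have sub: "{x. fisher_yates xs x \<noteq> fisher_yates ys x}
      \<subseteq> inv (fisher_yates vs) ` {length vs, a, b}"
    by (simp add: xs ys)
  have "card (inv (fisher_yates vs) ` {length vs, a, b}) \<le> 3"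
    by (rule order.trans[OF card_image_le]) (auto simp: card_insert_if)
  then show ?thesis
    using sub by (meson card_mono finite_imageI finite.emptyI finite_insert finite_subset le_trans)
qed

section \<open>Uniformly random homomorphisms as uniformly random codes\<close>

primrec hom_code_ranges :: "nat \<Rightarrow> nat \<Rightarrow> nat set list" where
  "hom_code_ranges n 0 = []"
| "hom_code_ranges n (Suc r) = fisher_yates_ranges n @ hom_code_ranges n r"

text \<open>Outside {..<r} the decoded tuple is undefined, as PiE requires of the elements of homs.\<close>

primrec decode_hom :: "nat \<Rightarrow> nat \<Rightarrow> nat list \<Rightarrow> (nat \<Rightarrow> nat \<Rightarrow> nat)" where
  "decode_hom n 0 xs = (\<lambda>_. undefined)"
| "decode_hom n (Suc r) xs = (decode_hom n r (drop n xs))(r := fisher_yates (take n xs))"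

lemma hom_code_ranges_finite_nonempty: "\<forall>S\<in>set (hom_code_ranges n r). finite S \<and> S \<noteq> {}"
  using fisher_yates_ranges_finite_nonempty[of n] by (induction r) auto

lemma length_hom_code_ranges [simp]: "length (hom_code_ranges n r) = r * n"
  by (induction r) auto

lemma decode_hom_Suc_append:
  "a \<in> listset (fisher_yates_ranges n) \<Longrightarrow>
    decode_hom n (Suc r) (a @ b) = (decode_hom n r b)(r := fisher_yates a)"
  using length_listset[of a "fisher_yates_ranges n"] by simp

declare decode_hom.simps(2) [simp del]

lemma bij_betw_decode_hom: "bij_betw (decode_hom n r) (listset (hom_code_ranges n r)) (homs r n)"
proof (induction r)
  case 0
  then show ?case by (simp add: homs_def bij_betw_def)
next
  case (Suc r)
  define P where "P = {p. p permutes {..<n}}"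
  define upd :: "(nat \<Rightarrow> nat) \<times> (nat \<Rightarrow> nat \<Rightarrow> nat) \<Rightarrow> nat \<Rightarrow> nat \<Rightarrow> nat"
    where "upd = (\<lambda>(y, g). g(r := y))"
  \<comment> \<open>decoding is the composition of the block split with the standard bijection for PiE\<close>
  have upd: "bij_betw upd (P \<times> homs r n) (homs (Suc r) n)"
    unfolding bij_betw_def homs_def P_def upd_def lessThan_Suc
    by (simp add: inj_combinator[where T="\<lambda>_. {p. p permutes {..<n}}"] PiE_insert_eq)
  have append: "bij_betw (\<lambda>(a, b). a @ b)
      (listset (fisher_yates_ranges n) \<times> listset (hom_code_ranges n r))
      (listset (hom_code_ranges n (Suc r)))"
    using bij_betw_append_listset by simp
  have parts: "bij_betw (map_prod fisher_yates (decode_hom n r))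
      (listset (fisher_yates_ranges n) \<times> listset (hom_code_ranges n r)) (P \<times> homs r n)"
    unfolding P_def using bij_betw_fisher_yates Suc.IH by (rule bij_betw_map_prod)
  have "bij_betw (upd \<circ> map_prod fisher_yates (decode_hom n r) \<circ> inv_into
      (listset (fisher_yates_ranges n) \<times> listset (hom_code_ranges n r)) (\<lambda>(a, b). a @ b))
      (listset (hom_code_ranges n (Suc r))) (homs (Suc r) n)"
    by (intro bij_betw_trans[OF bij_betw_inv_into[OF append]] bij_betw_trans[OF parts upd])
  then show ?case
  proof (rule bij_betw_cong[THEN iffD1, rotated])
    fix xs assume "xs \<in> listset (hom_code_ranges n (Suc r))"
    then obtain a b where ab: "xs = a @ b" "a \<in> listset (fisher_yates_ranges n)"
      "b \<in> listset (hom_code_ranges n r)"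
      by (auto simp: listset_append_iff)
    then have "inv_into (listset (fisher_yates_ranges n) \<times> listset (hom_code_ranges n r))
        (\<lambda>(a, b). a @ b) xs = (a, b)"
      using bij_betw_inv_into_left[OF append, of "(a, b)"] by simp
    then show "(upd \<circ> map_prod fisher_yates (decode_hom n r) \<circ> inv_into
        (listset (fisher_yates_ranges n) \<times> listset (hom_code_ranges n r)) (\<lambda>(a, b). a @ b)) xs
        = decode_hom n (Suc r) xs"
      using ab by (simp add: decode_hom_Suc_append upd_def)
  qed
qed

lemma finite_homs: "finite (homs r n)"
  unfolding homs_def by (intro finite_PiE) (auto simp: finite_permutations)

lemma homs_nonempty: "homs r n \<noteq> {}"
  unfolding homs_def PiE_eq_empty_iff by (auto intro: permutes_id)

lemma card_filter_bij_betw: "bij_betw h A B \<Longrightarrow> card {y\<in>B. P y} = card {x\<in>A. P (h x)}"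
  by (rule bij_betw_same_card[symmetric], rule bij_betw_subset[of h A B])
     (auto simp: bij_betw_def)

lemma prob_unif_hom:
  "measure_pmf.prob (unif_hom r n) {\<sigma>. P \<sigma>} = real (card {\<sigma>\<in>homs r n. P \<sigma>}) / real (card (homs r n))"
  unfolding unif_hom_def measure_pmf_of_set[OF homs_nonempty finite_homs]
  by (simp add: Int_def conj_commute)

section \<open>Bounded differences of the minimum bisection\<close>

definition disagreements :: "nat \<Rightarrow> nat \<Rightarrow> (nat \<Rightarrow> nat \<Rightarrow> nat) \<Rightarrow> (nat \<Rightarrow> nat \<Rightarrow> nat) \<Rightarrow> (nat \<times> nat) set"
  where "disagreements r n \<sigma> \<tau> = {(v, i). v < n \<and> i < r \<and> \<sigma> i v \<noteq> \<tau> i v}"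

lemma finite_disagreements: "finite (disagreements r n \<sigma> \<tau>)"
  by (rule finite_subset[of _ "{..<n} \<times> {..<r}"]) (auto simp: disagreements_def)

lemma cut_size_le_disagreements:
  "cut_size r n \<sigma> V \<le> cut_size r n \<tau> V + card (disagreements r n \<sigma> \<tau>)"
proof -
  define C where "C \<sigma> = {(v, i). v < n \<and> i < r \<and> ((v \<in> V) \<noteq> (\<sigma> i v \<in> V))}"
    for \<sigma> :: "nat \<Rightarrow> nat \<Rightarrow> nat"
  have fin: "finite (C \<tau>)"
    by (rule finite_subset[of _ "{..<n} \<times> {..<r}"]) (auto simp: C_def)
  have "C \<sigma> \<subseteq> C \<tau> \<union> disagreements r n \<sigma> \<tau>"
    by (auto simp: C_def disagreements_def)
  then have "card (C \<sigma>) \<le> card (C \<tau> \<union> disagreements r n \<sigma> \<tau>)"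
    by (intro card_mono) (use fin finite_disagreements in auto)
  also have "\<dots> \<le> card (C \<tau>) + card (disagreements r n \<sigma> \<tau>)"
    by (rule card_Un_le)
  finally show ?thesis by (simp add: cut_size_def C_def)
qed

lemma is_bisection_lessThan_half: "is_bisection n {..<n div 2}"
proof -
  have "{..<n} - {..<n div 2} = {n div 2..<n}" by auto
  then show ?thesis unfolding is_bisection_def by auto
qed

lemma finite_bisections: "finite {V. is_bisection n V}"
  by (rule finite_subset[of _ "Pow {..<n}"]) (auto simp: is_bisection_def)

lemma mcut_eq_Min_image: "mcut r n \<sigma> = Min (cut_size r n \<sigma> ` {V. is_bisection n V})"
  unfolding mcut_def by (rule arg_cong[where f = Min]) blast

lemma mcut_le_disagreements: "mcut r n \<sigma> \<le> mcut r n \<tau> + card (disagreements r n \<sigma> \<tau>)"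
proof -
  have ne: "{V. is_bisection n V} \<noteq> {}"
    using is_bisection_lessThan_half by blast
  have "mcut r n \<tau> \<in> cut_size r n \<tau> ` {V. is_bisection n V}"
    unfolding mcut_eq_Min_image by (rule Min_in) (use finite_bisections ne in auto)
  then obtain V where V: "is_bisection n V" "cut_size r n \<tau> V = mcut r n \<tau>"
    by auto
  have "mcut r n \<sigma> \<le> cut_size r n \<sigma> V"
    unfolding mcut_eq_Min_image by (rule Min_le) (use finite_bisections V in auto)
  also have "\<dots> \<le> mcut r n \<tau> + card (disagreements r n \<sigma> \<tau>)"
    using cut_size_le_disagreements[of r n \<sigma> V \<tau>] V by simp
  finally show ?thesis .
qed

lemma card_disagreements_decode_hom_le:
  "xs \<in> listset (hom_code_ranges n r) \<Longrightarrow> ys \<in> listset (hom_code_ranges n r) \<Longrightarrow>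
    differ_in_one xs ys \<Longrightarrow> card (disagreements r n (decode_hom n r xs) (decode_hom n r ys)) \<le> 3"
proof (induction r arbitrary: xs ys)
  case 0
  then show ?case by (simp add: disagreements_def)
next
  case (Suc r)
  obtain a b a' b' where ab: "xs = a @ b" "a \<in> listset (fisher_yates_ranges n)"
      "b \<in> listset (hom_code_ranges n r)"
    and ab': "ys = a' @ b'" "a' \<in> listset (fisher_yates_ranges n)"
      "b' \<in> listset (hom_code_ranges n r)"
    using Suc.prems by (auto simp: listset_append_iff)
  have len: "length a = length a'"
    using length_listset[OF ab(2)] length_listset[OF ab'(2)] by simp
  let ?D = "disagreements (Suc r) n (decode_hom n (Suc r) xs) (decode_hom n (Suc r) ys)"
  have decode: "decode_hom n (Suc r) xs = (decode_hom n r b)(r := fisher_yates a)"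
      "decode_hom n (Suc r) ys = (decode_hom n r b')(r := fisher_yates a')"
    unfolding ab(1) ab'(1) by (simp_all only: decode_hom_Suc_append ab(2) ab'(2))
  consider "a = a'" "differ_in_one b b'" | "differ_in_one a a'" "b = b'"
    using differ_in_one_append[OF len] Suc.prems(3) ab(1) ab'(1) by blast
  then show ?case
  proof cases
    case 1
    then have "?D = disagreements r n (decode_hom n r b) (decode_hom n r b')"
      unfolding decode disagreements_def by (auto simp: less_Suc_eq)
    then show ?thesis using Suc.IH[OF ab(3) ab'(3) 1(2)] by simp
  next
    case 2
    have sub: "?D \<subseteq> (\<lambda>v. (v, r)) ` {v. fisher_yates a v \<noteq> fisher_yates a' v}"
      unfolding decode disagreements_def using 2 by (auto simp: less_Suc_eq)
    have fin: "finite {v. fisher_yates a v \<noteq> fisher_yates a' v}"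
      and card: "card {v. fisher_yates a v \<noteq> fisher_yates a' v} \<le> 3"
      using fisher_yates_differ_in_one[OF 2(1)] by auto
    have "card ?D \<le> card ((\<lambda>v. (v, r)) ` {v. fisher_yates a v \<noteq> fisher_yates a' v})"
      by (rule card_mono[OF _ sub]) (use fin in auto)
    also have "\<dots> \<le> 3"
      using card_image_le[OF fin, of "\<lambda>v. (v, r)"] card by linarith
    finally show ?thesis .
  qed
qed

lemma mcut_decode_hom_bounded_differences:
  assumes "xs \<in> listset (hom_code_ranges n r)" "ys \<in> listset (hom_code_ranges n r)"
    "differ_in_one xs ys"
  shows "real (mcut r n (decode_hom n r xs)) - real (mcut r n (decode_hom n r ys)) \<le> 3"
  using mcut_le_disagreements[of r n "decode_hom n r xs" "decode_hom n r ys"]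
    card_disagreements_decode_hom_le[OF assms] by linarith

lemma mcut_lower_tail:
  assumes "r > 0" "n > 0" "t > 0"
  shows "measure_pmf.prob (unif_hom r n)
      {\<sigma>. real (mcut r n \<sigma>) \<le> avg (homs r n) (\<lambda>\<sigma>. real (mcut r n \<sigma>)) - t}
    \<le> exp (- 2 * t\<^sup>2 / (9 * (real r * real n)))"
proof -
  define L where "L = listset (hom_code_ranges n r)"
  define F where "F xs = real (mcut r n (decode_hom n r xs))" for xs
  have bij: "bij_betw (decode_hom n r) L (homs r n)"
    unfolding L_def by (rule bij_betw_decode_hom)
  have card_L: "real (card L) > 0"
    using hom_code_ranges_finite_nonempty[of n r] unfolding L_def
    by (auto simp: card_gt_0_iff intro!: finite_listset listset_nonempty)
  have "measure_pmf.prob (unif_hom r n)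
      {\<sigma>. real (mcut r n \<sigma>) \<le> avg (homs r n) (\<lambda>\<sigma>. real (mcut r n \<sigma>)) - t}
    = real (card {xs\<in>L. F xs \<le> avg L F - t}) / real (card L)"
    unfolding prob_unif_hom card_filter_bij_betw[OF bij] avg_reindex_bij_betw[OF bij]
      bij_betw_same_card[OF bij, symmetric] F_def ..
  also have "\<dots> \<le> exp (- 2 * t\<^sup>2 / (3\<^sup>2 * real (length (hom_code_ranges n r))))"
  proof -
    have nonempty: "hom_code_ranges n r \<noteq> []"
      using assms length_hom_code_ranges[of n r] by (metis list.size(3) mult_is_0 not_less0)
    have "real (card {xs\<in>L. F xs \<le> avg L F - t})
        \<le> real (card L) * exp (- 2 * t\<^sup>2 / (3\<^sup>2 * real (length (hom_code_ranges n r))))"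
      unfolding L_def
      by (rule mcdiarmid_lower_tail) (use assms nonempty hom_code_ranges_finite_nonempty
          mcut_decode_hom_bounded_differences in \<open>auto simp: F_def\<close>)
    then show ?thesis using card_L by (simp add: divide_le_eq mult.commute)
  qed
  also have "\<dots> = exp (- 2 * t\<^sup>2 / (9 * (real r * real n)))"
    by simp
  finally show ?thesis .
qed

section \<open>Exponential decay of the lower tail\<close>

lemma mcut_mean_lower_bound:
  assumes "eps_c > 0" "0 < \<eta>" "\<eta> \<le> eps_c" "r > 0" "n > 0"
    and few: "measure_pmf.prob (unif_hom r n) {\<sigma>. \<bar>mcut_ratio r n \<sigma> - eps_c\<bar> > \<eta>} \<le> \<eta> / eps_c"
  shows "(eps_c - 2 * \<eta>) * (real r * real n) \<le> avg (homs r n) (\<lambda>\<sigma>. real (mcut r n \<sigma>))"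
proof -
  define rn where "rn = real r * real n"
  define m where "m = (eps_c - \<eta>) * rn"
  have rn: "rn > 0" using assms by (simp add: rn_def)
  have m: "m \<ge> 0" using assms rn by (simp add: m_def)
  have card_homs: "real (card (homs r n)) > 0"
    using finite_homs homs_nonempty by (simp add: card_gt_0_iff)
  have "mcut_ratio r n \<sigma> < eps_c - \<eta>" if "real (mcut r n \<sigma>) < m" for \<sigma>
    using that rn by (simp add: m_def mcut_ratio_def rn_def divide_less_eq)
  then have "{\<sigma>\<in>homs r n. real (mcut r n \<sigma>) < m} \<subseteq> {\<sigma>\<in>homs r n. \<bar>mcut_ratio r n \<sigma> - eps_c\<bar> > \<eta>}"
    by force
  then have "real (card {\<sigma>\<in>homs r n. real (mcut r n \<sigma>) < m})
      \<le> real (card {\<sigma>\<in>homs r n. \<bar>mcut_ratio r n \<sigma> - eps_c\<bar> > \<eta>})"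
    by (intro of_nat_mono card_mono) (auto intro: finite_subset[OF _ finite_homs])
  also have "\<dots> \<le> \<eta> / eps_c * real (card (homs r n))"
    using few card_homs by (simp add: prob_unif_hom divide_le_eq)
  finally have "(1 - \<eta> / eps_c) * m \<le> avg (homs r n) (\<lambda>\<sigma>. real (mcut r n \<sigma>))"
    by (intro avg_ge_of_few_below finite_homs homs_nonempty m) auto
  moreover have "(eps_c - 2 * \<eta>) * rn \<le> (1 - \<eta> / eps_c) * m"
  proof -
    have "(1 - \<eta> / eps_c) * (eps_c - \<eta>) = eps_c - 2 * \<eta> + \<eta>\<^sup>2 / eps_c"
      using assms(1) by (simp add: field_simps power2_eq_square)
    then show ?thesis
      using rn assms(1) by (simp add: m_def mult.assoc[symmetric] mult_right_mono)
  qed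
  ultimately show ?thesis by (simp add: rn_def)
qed

lemma eventually_prob_mcut_ratio_less_le_exp:
  assumes lim: "\<forall>\<eta>>0. (\<lambda>n. measure_pmf.prob (unif_hom r n)
              {\<sigma>. \<bar>mcut_ratio r n \<sigma> - eps_c\<bar> > \<eta>}) \<longlonglongrightarrow> 0"
    and "0 \<le> \<epsilon>" "\<epsilon> < eps_c" "r > 0" "0 < \<delta>" "\<delta> < (eps_c - \<epsilon>) / 2"
  shows "\<forall>\<^sub>F n in sequentially. measure_pmf.prob (unif_hom r n) {\<sigma>. mcut_ratio r n \<sigma> < \<epsilon> + \<delta>}
            \<le> exp (- ((eps_c - \<epsilon>)\<^sup>2 * real r / 72) * real n)"
proof -
  define g where "g = eps_c - \<epsilon>"
  define \<eta> where "\<eta> = g / 8"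
  have g: "g > 0" "g \<le> eps_c" using assms by (simp_all add: g_def)
  have \<eta>: "\<eta> > 0" "\<eta> \<le> eps_c" using g by (simp_all add: \<eta>_def)
  have "\<forall>\<^sub>F n in sequentially. measure_pmf.prob (unif_hom r n)
      {\<sigma>. \<bar>mcut_ratio r n \<sigma> - eps_c\<bar> > \<eta>} < \<eta> / eps_c"
    by (rule order_tendstoD(2)[OF lim[rule_format, OF \<eta>(1)]]) (use \<eta> g in simp)
  then show ?thesis
    using eventually_gt_at_top[of 0]
  proof eventually_elim
    case (elim n)
    define rn where "rn = real r * real n"
    define t where "t = g / 4 * rn"
    have rn: "rn > 0" using assms elim by (simp add: rn_def)
    have t: "t > 0" using g rn by (simp add: t_def)
    have mean: "(eps_c - 2 * \<eta>) * rn \<le> avg (homs r n) (\<lambda>\<sigma>. real (mcut r n \<sigma>))"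
      unfolding rn_def
      by (rule mcut_mean_lower_bound) (use \<eta> g assms elim in \<open>auto intro: less_imp_le\<close>)
    have "{\<sigma>. mcut_ratio r n \<sigma> < \<epsilon> + \<delta>}
        \<subseteq> {\<sigma>. real (mcut r n \<sigma>) \<le> avg (homs r n) (\<lambda>\<sigma>. real (mcut r n \<sigma>)) - t}"
    proof safe
      fix \<sigma> assume "mcut_ratio r n \<sigma> < \<epsilon> + \<delta>"
      then have "real (mcut r n \<sigma>) < (\<epsilon> + \<delta>) * rn"
        using rn by (simp add: mcut_ratio_def rn_def divide_less_eq)
      also have "\<dots> \<le> (eps_c - 2 * \<eta> - g / 4) * rn"
        using assms(6) rn by (intro mult_right_mono) (auto simp: \<eta>_def g_def field_simps)
      also have "\<dots> = (eps_c - 2 * \<eta>) * rn - t"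
        by (simp add: t_def algebra_simps)
      finally show "real (mcut r n \<sigma>) \<le> avg (homs r n) (\<lambda>\<sigma>. real (mcut r n \<sigma>)) - t"
        using mean by simp
    qed
    then have "measure_pmf.prob (unif_hom r n) {\<sigma>. mcut_ratio r n \<sigma> < \<epsilon> + \<delta>}
        \<le> measure_pmf.prob (unif_hom r n)
            {\<sigma>. real (mcut r n \<sigma>) \<le> avg (homs r n) (\<lambda>\<sigma>. real (mcut r n \<sigma>)) - t}"
      by (rule measure_pmf.finite_measure_mono) simp
    also have "\<dots> \<le> exp (- 2 * t\<^sup>2 / (9 * rn))"
      unfolding rn_def using mcut_lower_tail[OF assms(4) elim(2) t] .
    also have "- 2 * t\<^sup>2 / (9 * rn) = - (g\<^sup>2 * real r / 72) * real n"
      using rn by (simp add: t_def power2_eq_square field_simps) (simp add: rn_def)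
    finally show ?case by (simp add: g_def)
  qed
qed

lemma Liminf_elog_div_less_zero:
  assumes "c > 0" "\<forall>\<^sub>F n in sequentially. 0 \<le> p n \<and> p n \<le> exp (- c * real n)"
  shows "Liminf sequentially (\<lambda>n. elog (p n) / ereal (real n)) < 0"
proof -
  have "\<forall>\<^sub>F n in sequentially. elog (p n) / ereal (real n) \<le> ereal (- c)"
    using assms(2) eventually_gt_at_top[of 0]
  proof eventually_elim
    case (elim n)
    show ?case
    proof (cases "p n = 0")
      case True
      then show ?thesis using elim by (simp add: elog_def divide_ereal_def)
    next
      case False
      then have "ln (p n) \<le> - c * real n"
        using elim by (metis exp_le_cancel_iff exp_ln order_less_le)
      then show ?thesis
        using False elim by (simp add: elog_def pos_divide_le_eq)
    qed
  qed
  then have "Liminf sequentially (\<lambda>n. elog (p n) / ereal (real n)) \<le> ereal (- c)"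
    by (rule Liminf_le[OF sequentially_bot])
  also have "\<dots> < 0" using assms(1) by simp
  finally show ?thesis .
qed

text \<open>For r = 0 the ratio is 0/0 = 0, so convergence in probability to a positive constant fails.\<close>

lemma pos_generators_of_eps_c_pos:
  assumes lim: "\<forall>\<eta>>0. (\<lambda>n. measure_pmf.prob (unif_hom r n)
              {\<sigma>. \<bar>mcut_ratio r n \<sigma> - eps_c\<bar> > \<eta>}) \<longlonglongrightarrow> 0"
    and "eps_c > 0"
  shows "r > 0"
proof (rule ccontr)
  assume "\<not> r > 0"
  then have "{\<sigma>. \<bar>mcut_ratio r n \<sigma> - eps_c\<bar> > eps_c / 2} = UNIV" for n
    using assms(2) by (auto simp: mcut_ratio_def)
  then have "(\<lambda>n. 1 :: real) \<longlonglongrightarrow> 0"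
    using lim[rule_format, of "eps_c / 2"] assms(2) by simp
  then show False by (simp add: LIMSEQ_const_iff)
qed

lemma mcut_ratio_nonneg: "0 \<le> mcut_ratio r n \<sigma>"
  by (simp add: mcut_ratio_def)

theorem mainTheorem17:
  fixes r :: nat and eps_c \<epsilon> :: real
  assumes eps_c_limit: "\<forall>\<eta>>0. (\<lambda>n. measure_pmf.prob (unif_hom r n)
              {\<sigma>. \<bar>mcut_ratio r n \<sigma> - eps_c\<bar> > \<eta>}) \<longlonglongrightarrow> 0"
    and "\<epsilon> < eps_c"
  shows "\<exists>\<delta>0>0. \<forall>\<delta>. 0 < \<delta> \<and> \<delta> < \<delta>0 \<longrightarrow>
           Liminf sequentially (\<lambda>n. elog (measure_pmf.prob (unif_hom r n)
              {\<sigma>. mcut_ratio r n \<sigma> < \<epsilon> + \<delta>}) / ereal (real n)) < 0"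
proof (cases "\<epsilon> < 0")
  case True
  have "{\<sigma>. mcut_ratio r n \<sigma> < \<epsilon> + \<delta>} = {}" if "\<delta> < - \<epsilon>" for n \<delta>
    using that mcut_ratio_nonneg[of r n] by (simp add: not_less) (smt (verit))
  then show ?thesis
    using True by (intro exI[of _ "- \<epsilon>"]) (auto intro!: Liminf_elog_div_less_zero[of 1])
next
  case False
  then have r: "r > 0"
    using pos_generators_of_eps_c_pos[OF eps_c_limit] assms(2) by simp
  show ?thesis
  proof (intro exI[of _ "(eps_c - \<epsilon>) / 2"] conjI allI impI)
    fix \<delta> :: real assume "0 < \<delta> \<and> \<delta> < (eps_c - \<epsilon>) / 2"
    then have "\<forall>\<^sub>F n in sequentially. measure_pmf.prob (unif_hom r n) {\<sigma>. mcut_ratio r n \<sigma> < \<epsilon> + \<delta>}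
        \<le> exp (- ((eps_c - \<epsilon>)\<^sup>2 * real r / 72) * real n)"
      using False assms(2) r by (intro eventually_prob_mcut_ratio_less_le_exp[OF eps_c_limit]) auto
    then show "Liminf sequentially (\<lambda>n. elog (measure_pmf.prob (unif_hom r n)
        {\<sigma>. mcut_ratio r n \<sigma> < \<epsilon> + \<delta>}) / ereal (real n)) < 0"
      using assms(2) r
      by (intro Liminf_elog_div_less_zero[of "(eps_c - \<epsilon>)\<^sup>2 * real r / 72"])
         (auto elim: eventually_mono)
  qed (use assms(2) in simp)
qed

end
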